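(* Let $n\ge2$ be an integer and $\tau=\inf\{t\ge0: p_t\ge n\}$ for the Markov chain $(p_t)$ with $p_0=1$ defined in the context. Then $\mathbb{E}[\tau]\le (n^2-n+2)/2$.
   Context: $(p_t)_{t\ge0}$ is a time-homogeneous Markov chain on the positive integers with $p_0=1$ and transitions: if $p_t=p\ge2$, then $\mathbb{P}(p_{t+1}=p+j)=(1/2)^{j+2}$ for $j\in\{-1,0,1,2,\dots\}$; if $p_t=1$, then $\mathbb{P}(p_{t+1}=1+j)=(1/2)^{j+1}$ for $j\in\{0,1,2,\dots\}$. (It models the position of a $*$ symbol, started in the first position, in the deterministic-scan bounding chain; $\tau$ is the number of scans until it reaches position $n$.) *)

theory Defs
  imports "HOL-Probability.Probability"
begin

text \<open>State 0 is never visited; its row is set to 0.\<close>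
definition trans_prob :: "nat \<Rightarrow> nat \<Rightarrow> real" where
  "trans_prob p q =
     (if p = 1 then (if 1 \<le> q then (1/2) ^ q else 0)
      else if 2 \<le> p then (if p \<le> q + 1 then (1/2) ^ (q + 2 - p) else 0)
      else 0)"

text \<open>Hitting time inf {t >= 0 : f t >= n}, with inf of the empty set = infinity.\<close>
definition hitting_time :: "nat \<Rightarrow> (nat \<Rightarrow> nat) \<Rightarrow> enat" where
  "hitting_time n f = (INF t\<in>{t. n \<le> f t}. enat t)"

end

theory Submission
  imports Defs
begin

text \<open>With Q(m) = hit_bound m = 1 + m(m-1)/2, the potential V(j) = Q(n) - Q(j) + j on the states
  j < n (and 0 from n on) takes values in [0, Q(n)] and decreases by exactly 1 in
  expectation from every state 1 \<le> q < n: the chain jumps to max 1 (q - 1) + k with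
  probability 2^-(k+1), and Q(m+1) = Q(m) + m makes the resulting sum telescope.
  Hence the expected potential on the event \<tau> > t drops by at least P(\<tau> > t) per step,
  so E \<tau> = \<Sum>t P(\<tau> > t) \<le> Q(n).\<close>

definition hit_bound :: "nat \<Rightarrow> real" where
  "hit_bound m = (real m ^ 2 - real m + 2) / 2"

definition potential :: "nat \<Rightarrow> nat \<Rightarrow> real" where
  "potential n j = (if j < n then hit_bound n - hit_bound j + real j else 0)"

lemma hit_bound_Suc: "hit_bound (Suc m) = hit_bound m + real m"
  by (simp add: hit_bound_def power2_eq_square field_simps)

lemma hit_bound_mono: "m \<le> k \<Longrightarrow> hit_bound m \<le> hit_bound k"
  by (induction k rule: dec_induct) (auto simp: hit_bound_Suc)

lemma hit_bound_ge: "real m \<le> hit_bound m"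
proof -
  have "0 \<le> (real m - 1) * (real m - 2)"
    by (cases "m \<le> 1") (auto simp: le_Suc_eq)
  then show ?thesis by (simp add: hit_bound_def power2_eq_square algebra_simps)
qed

lemma potential_nonneg: "0 \<le> potential n j"
  using hit_bound_mono[of j n] by (simp add: potential_def)

lemma potential_le: "potential n j \<le> hit_bound n"
  using hit_bound_ge[of j] hit_bound_ge[of n] by (simp add: potential_def)

lemma sum_half_powers_hit_bound:
  "(\<Sum>k<m. (1/2) ^ Suc k * (c - hit_bound (a + k) + real (a + k)))
     = c - hit_bound a - (1/2) ^ m * (c - hit_bound (a + m))"
proof (induction m)
  case (Suc m)
  define x :: real where "x = (1/2) ^ m"
  define d where "d = c - hit_bound (a + m)"
  have "(\<Sum>k<Suc m. (1/2) ^ Suc k * (c - hit_bound (a + k) + real (a + k)))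
      = c - hit_bound a - x * d + x / 2 * (d + real (a + m))"
    unfolding sum.lessThan_Suc Suc.IH by (simp add: x_def d_def)
  also have "\<dots> = c - hit_bound a - x / 2 * (d - real (a + m))"
    by (simp add: algebra_simps)
  also have "d - real (a + m) = c - hit_bound (a + Suc m)"
    by (simp add: d_def hit_bound_Suc)
  finally show ?case by (simp add: x_def)
qed simp

lemma trans_prob_from_pos:
  assumes "1 \<le> q"
  shows "trans_prob q j =
    (if max 1 (q - 1) \<le> j then (1/2) ^ Suc (j - max 1 (q - 1)) else 0)"
proof (cases "q = 1")
  case True
  then show ?thesis by (cases j) (simp_all add: trans_prob_def)
qed (use assms in \<open>auto simp: trans_prob_def Suc_diff_le\<close>)

lemma potential_drift_eq:
  assumes "1 \<le> q" "q < n"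
  shows "(\<Sum>j<n. trans_prob q j * potential n j) = potential n q - 1"
proof -
  define a where "a = max 1 (q - 1)"
  have "a \<le> n" using assms by (simp add: a_def)
  have "(\<Sum>j<n. trans_prob q j * potential n j)
      = (\<Sum>j\<in>{a..<n}. (1/2) ^ Suc (j - a) * (hit_bound n - hit_bound j + real j))"
  proof -
    have "(\<Sum>j<n. trans_prob q j * potential n j)
        = (\<Sum>j<n. if a \<le> j
             then (1/2) ^ Suc (j - a) * (hit_bound n - hit_bound j + real j) else 0)"
      using assms(1) by (intro sum.cong) (auto simp: trans_prob_from_pos a_def potential_def)
    also have "\<dots> = (\<Sum>j\<in>{j \<in> {..<n}. a \<le> j}.
        (1/2) ^ Suc (j - a) * (hit_bound n - hit_bound j + real j))"
      by (rule sum.inter_filter[symmetric]) simp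
    also have "{j \<in> {..<n}. a \<le> j} = {a..<n}"
      by auto
    finally show ?thesis .
  qed
  also have "\<dots> = (\<Sum>k<n - a. (1/2) ^ Suc k * (hit_bound n - hit_bound (a + k) + real (a + k)))"
    by (subst sum.atLeastLessThan_shift_0) (simp add: atLeast0LessThan)
  also have "\<dots> = hit_bound n - hit_bound a"
    using sum_half_powers_hit_bound[where m = "n - a" and c = "hit_bound n" and a = a] \<open>a \<le> n\<close>
    by simp
  also have "hit_bound a = hit_bound q - real q + 1"
    using assms hit_bound_Suc[of "q - 1"] by (cases "q = 1") (auto simp: a_def)
  finally show ?thesis using assms by (simp add: potential_def)
qed

lemma potential_drift_le:
  assumes "2 \<le> n" "q < n"
  shows "(\<Sum>j<n. trans_prob q j * potential n j) \<le> potential n q - 1"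
proof (cases "q = 0")
  case True
  have "2 \<le> hit_bound n" using hit_bound_ge[of n] assms(1) by linarith
  with True show ?thesis using assms by (simp add: trans_prob_def potential_def hit_bound_def)
qed (use assms potential_drift_eq in auto)

lemma enat_less_hitting_time_iff:
  "enat s < hitting_time n f \<longleftrightarrow> (\<forall>i\<le>s. f i < n)"
proof -
  have "enat s < hitting_time n f \<longleftrightarrow> (\<forall>t. n \<le> f t \<longrightarrow> s < t)"
    unfolding hitting_time_def Suc_ile_eq[symmetric] le_INF_iff by auto
  also have "\<dots> \<longleftrightarrow> (\<forall>i\<le>s. f i < n)"
    by (auto simp: not_le)
  finally show ?thesis .
qed

lemma ennreal_of_enat_eq_suminf: "ennreal_of_enat x = (\<Sum>s. of_bool (enat s < x))"
proof (cases x)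
  case (enat k)
  then show ?thesis by (subst suminf_finite[of "{..<k}"]) auto
next
  case infinity
  have "(\<Sum>s. ennreal 1) = \<top>"
    by (rule summable_iff_suminf_neq_top) (auto simp: summable_const_iff)
  then show ?thesis using infinity by simp
qed

locale level_chain = prob_space M for M :: "'a measure" +
  fixes p :: "nat \<Rightarrow> 'a \<Rightarrow> nat" and n :: nat
  assumes measurable_p[measurable]: "\<And>t. p t \<in> measurable M (count_space UNIV)"
    and prob_cylinder_step: "\<And>t h j.
      measure M {\<omega>\<in>space M. (\<forall>i\<le>t. p i \<omega> = h i) \<and> p (Suc t) \<omega> = j}
        = measure M {\<omega>\<in>space M. \<forall>i\<le>t. p i \<omega> = h i} * trans_prob (h t) j"
    and two_le_level: "2 \<le> n"
begin

definition paths_below :: "nat \<Rightarrow> nat list set" where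
  "paths_below t = {xs. length xs = Suc t \<and> set xs \<subseteq> {..<n}}"

definition cylinder :: "nat list \<Rightarrow> 'a set" where
  "cylinder xs = {\<omega>\<in>space M. \<forall>i<length xs. p i \<omega> = xs ! i}"

definition survives :: "nat \<Rightarrow> 'a set" where
  "survives t = {\<omega>\<in>space M. \<forall>i\<le>t. p i \<omega> < n}"

text \<open>E[V(p t); \<tau> > t], written as a sum over paths because the hypothesis on the chain
  only concerns cylinder sets.\<close>
definition mean_potential :: "nat \<Rightarrow> real" where
  "mean_potential t = (\<Sum>xs\<in>paths_below t. prob (cylinder xs) * potential n (last xs))"

lemma finite_paths_below: "finite (paths_below t)"
proof -
  have "paths_below t = {xs. set xs \<subseteq> {..<n} \<and> length xs = Suc t}"
    unfolding paths_below_def by auto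
  then show ?thesis using finite_lists_length_eq[of "{..<n}" "Suc t"] by simp
qed

lemma last_in_paths_below:
  assumes "xs \<in> paths_below t"
  shows "last xs < n"
proof -
  have "xs \<noteq> []" "set xs \<subseteq> {..<n}"
    using assms unfolding paths_below_def by auto
  then show ?thesis by (meson last_in_set lessThan_iff subsetD)
qed

lemma sets_cylinder[measurable]: "cylinder xs \<in> events"
  unfolding cylinder_def by measurable

lemma sets_survives[measurable]: "survives t \<in> events"
  unfolding survives_def by measurable

lemma cylinder_eq_path:
  assumes "length xs = Suc t"
  shows "cylinder xs = {\<omega>\<in>space M. xs = map (\<lambda>i. p i \<omega>) [0..<Suc t]}"
  using assms unfolding cylinder_def by (auto simp: list_eq_iff_nth_eq simp del: upt_Suc)

lemma survives_eq_UN_cylinder: "survives t = (\<Union>xs\<in>paths_below t. cylinder xs)"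
  unfolding survives_def paths_below_def
  by (auto simp: cylinder_eq_path image_subset_iff simp del: upt_Suc)

lemma disjoint_family_cylinder: "disjoint_family_on cylinder (paths_below t)"
  unfolding disjoint_family_on_def paths_below_def by (auto simp: cylinder_eq_path)

lemma prob_survives: "prob (survives t) = (\<Sum>xs\<in>paths_below t. prob (cylinder xs))"
  unfolding survives_eq_UN_cylinder
  by (rule finite_measure_finite_Union) (auto simp: finite_paths_below disjoint_family_cylinder)

lemma paths_below_Suc: "paths_below (Suc t) = (\<lambda>(xs, j). xs @ [j]) ` (paths_below t \<times> {..<n})"
proof (intro equalityI subsetI)
  fix ys assume ys: "ys \<in> paths_below (Suc t)"
  then have "ys \<noteq> []" unfolding paths_below_def by auto
  with ys have "ys = butlast ys @ [last ys]" "butlast ys \<in> paths_below t" "last ys < n"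
    using last_in_paths_below[OF ys] unfolding paths_below_def
    by (auto dest: in_set_butlastD)
  then show "ys \<in> (\<lambda>(xs, j). xs @ [j]) ` (paths_below t \<times> {..<n})"
    by (metis (no_types, lifting) SigmaI case_prod_conv image_eqI lessThan_iff)
qed (auto simp: paths_below_def)

lemma prob_cylinder_snoc:
  assumes "length xs = Suc t"
  shows "prob (cylinder (xs @ [j])) = prob (cylinder xs) * trans_prob (last xs) j"
proof -
  have "{\<omega>\<in>space M. (\<forall>i\<le>t. p i \<omega> = (xs @ [j]) ! i) \<and> p (Suc t) \<omega> = j}
      = cylinder (xs @ [j])"
    using assms unfolding cylinder_def by (auto simp: nth_append less_Suc_eq less_Suc_eq_le)
  moreover have "{\<omega>\<in>space M. \<forall>i\<le>t. p i \<omega> = (xs @ [j]) ! i} = cylinder xs"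
    using assms unfolding cylinder_def by (auto simp: nth_append less_Suc_eq_le)
  moreover have "(xs @ [j]) ! t = last xs"
    using assms by (cases xs rule: rev_cases) (auto simp: nth_append)
  ultimately show ?thesis
    using prob_cylinder_step[of t "\<lambda>i. (xs @ [j]) ! i" j] by simp
qed

lemma mean_potential_Suc_le: "mean_potential (Suc t) \<le> mean_potential t - prob (survives t)"
proof -
  have "mean_potential (Suc t)
      = (\<Sum>(xs, j)\<in>paths_below t \<times> {..<n}. prob (cylinder (xs @ [j])) * potential n j)"
    unfolding mean_potential_def paths_below_Suc
    by (subst sum.reindex) (auto simp: inj_on_def case_prod_unfold)
  also have "\<dots> = (\<Sum>xs\<in>paths_below t.
      prob (cylinder xs) * (\<Sum>j<n. trans_prob (last xs) j * potential n j))"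
    unfolding sum.cartesian_product[symmetric]
    by (intro sum.cong refl) (auto simp: prob_cylinder_snoc paths_below_def sum_distrib_left mult.assoc)
  also have "\<dots> \<le> (\<Sum>xs\<in>paths_below t. prob (cylinder xs) * (potential n (last xs) - 1))"
    by (intro sum_mono mult_left_mono potential_drift_le two_le_level last_in_paths_below) auto
  also have "\<dots> = mean_potential t - prob (survives t)"
    unfolding mean_potential_def prob_survives by (simp add: right_diff_distrib sum_subtractf)
  finally show ?thesis .
qed

lemma mean_potential_nonneg: "0 \<le> mean_potential t"
  unfolding mean_potential_def by (intro sum_nonneg mult_nonneg_nonneg potential_nonneg) auto

lemma mean_potential_le: "mean_potential t \<le> hit_bound n"
proof -
  have "mean_potential t \<le> (\<Sum>xs\<in>paths_below t. prob (cylinder xs)) * hit_bound n"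
    unfolding mean_potential_def sum_distrib_right by (intro sum_mono mult_left_mono potential_le) auto
  also have "\<dots> \<le> hit_bound n"
    using prob_survives[of t] prob_le_1[of "survives t"] hit_bound_ge[of n]
    by (intro mult_left_le_one_le) (auto intro: sum_nonneg)
  finally show ?thesis .
qed

lemma sum_prob_survives_le: "(\<Sum>s<t. prob (survives s)) \<le> hit_bound n"
proof -
  have "(\<Sum>s<t. prob (survives s)) + mean_potential t \<le> mean_potential 0"
  proof (induction t)
    case (Suc t)
    then show ?case using mean_potential_Suc_le[of t] by simp
  qed simp
  then show ?thesis
    using mean_potential_nonneg[of t] mean_potential_le[of 0] by linarith
qed

lemma nn_integral_hitting_time_le:
  "(\<integral>\<^sup>+ \<omega>. ennreal_of_enat (hitting_time n (\<lambda>t. p t \<omega>)) \<partial>M) \<le> ennreal (hit_bound n)"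
proof -
  have "(\<integral>\<^sup>+ \<omega>. ennreal_of_enat (hitting_time n (\<lambda>t. p t \<omega>)) \<partial>M)
      = (\<integral>\<^sup>+ \<omega>. (\<Sum>s. indicator (survives s) \<omega>) \<partial>M)"
    by (intro nn_integral_cong)
      (simp add: ennreal_of_enat_eq_suminf enat_less_hitting_time_iff survives_def indicator_def)
  also have "\<dots> = (\<Sum>s. ennreal (prob (survives s)))"
    by (simp add: nn_integral_suminf emeasure_eq_measure)
  also have "\<dots> \<le> ennreal (hit_bound n)"
    using sum_prob_survives_le
    by (intro suminf_le_const summableI) (simp add: sum_ennreal ennreal_leI)
  finally show ?thesis .
qed

end

theorem lemma5:
  fixes M :: "'a measure" and p :: "nat \<Rightarrow> 'a \<Rightarrow> nat" and n :: nat
  assumes "prob_space M"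
    and "\<And>t. p t \<in> measurable M (count_space UNIV)"
    and "AE \<omega> in M. p 0 \<omega> = 1"
    and "\<And>t h j. measure M {\<omega>\<in>space M. (\<forall>i\<le>t. p i \<omega> = h i) \<and> p (Suc t) \<omega> = j}
                 = measure M {\<omega>\<in>space M. \<forall>i\<le>t. p i \<omega> = h i} * trans_prob (h t) j"
    and "2 \<le> n"
  shows "(\<integral>\<^sup>+ \<omega>. ennreal_of_enat (hitting_time n (\<lambda>t. p t \<omega>)) \<partial>M)
           \<le> ennreal ((real n ^ 2 - real n + 2) / 2)"
proof -
  \<comment> \<open>The initial state is irrelevant: the potential is at most Q(n) everywhere.\<close>
  interpret level_chain M p n
    using assms(1,2,4,5) by (intro level_chain.intro level_chain_axioms.intro) auto
  show ?thesis
    using nn_integral_hitting_time_le by (simp add: hit_bound_def)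
qed

end
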